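(* Let $(C^\bullet,d,d^* )$ be a $\mathbb{Z}_2$-graded bi-graded complex of finite-dimensional ${\bf k}$-vector spaces and suppose that the combinatorial Laplacian $\Delta=d^*d+dd^*$ has no zero eigenvalue. Then $H^\bullet(d)=0$ and $H_\bullet(d^* )=0$. Moreover, $d^*d$ maps $C_+^{\bar k}$ isomorphically onto itself for $k=0,1$, and (identifying $\operatorname{Det}(H^\bullet(d))\otimes\operatorname{Det}(H_\bullet(d^* ))^{-1}={\bf k}$) $$\tau(C^\bullet,d,d^* )=\operatorname{Det}\big(d^*d|_{C_+^{\bar 0}}\big)\cdot\operatorname{Det}\big(d^*d|_{C_+^{\bar 1}}\big)^{-1}.$$
   Context: ${\bf k}$ is a field of characteristic zero; bars on integers denote residues mod 2. A $\mathbb{Z}_2$-graded bi-graded complex $(C^\bullet,d,d^* )$ consists of finite-dimensional ${\bf k}$-vector spaces $C^{\bar 0},C^{\bar 1}$ and linear maps $d:C^{\bar k}\to C^{\overline{k+1}}$, $d^*:C^{\bar k}\to C^{\overline{k-1}}$ with $d^2=0$, $(d^* )^2=0$ ($d^*$ is not assumed to be an adjoint of $d$). $H^{\bar k}(d)$ is the cohomology of $(C^\bullet,d)$ and $H_{\bar k}(d^* )$ the homology of $(C^\bullet,d^* )$. For a finite-dimensional space $V$ of dimension $n$, $\operatorname{Det}(V)=\wedge^nV$ ($\operatorname{Det}(0)={\bf k}$), $\operatorname{Det}(V)^{-1}$ is its dual line; $\operatorname{Det}(C^\bullet)=\operatorname{Det}(C^{\bar0})\otimes\operatorname{Det}(C^{\bar1})^{-1}$,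 and similarly $\operatorname{Det}(H^\bullet(d))$, $\operatorname{Det}(H_\bullet(d^* ))$. For spaces $V_1,\dots,V_r$, $\mu_{V_1,\dots,V_r}:\operatorname{Det}V_1\otimes\cdots\otimes\operatorname{Det}V_r\to\operatorname{Det}(V_1\oplus\cdots\oplus V_r)$ is the fusion isomorphism $v_1\otimes\cdots\otimes v_r\mapsto v_1\wedge\cdots\wedge v_r$. Torsion: for $k=0,1$ choose decompositions $C^{\bar k}=B^{\bar k}\oplus H^{\bar k}\oplus A^{\bar k}$ with $B^{\bar k}\oplus H^{\bar k}=\operatorname{Ker}d\cap C^{\bar k}$, $B^{\bar k}=d(C^{\overline{k-1}})=d(A^{\overline{k-1}})$, and $C^{\bar k}=B_{\bar k}\oplus H_{\bar k}\oplus A_{\bar k}$ with $B_{\bar k}\oplus H_{\bar k}=\operatorname{Ker}d^*\cap C^{\bar k}$, $B_{\bar k}=d^*(C^{\overline{k+1}})=d^*(A_{\overline{k+1}})$. Given nonzero $c_{\bar k}\in\operatorname{Det}C^{\bar k}$, $x_{\bar k}\in\operatorname{Det}A^{\bar k}$, $y_{\bar k}\in\operatorname{Det}A_{\bar k}$, let $h_{\bar k}\in\operatorname{Det}H^{\bar k}$, $h'_{\bar k}\in\operatorname{Det}H_{\bar k}$ be the unique elements with $c_{\bar k}=\mu_{B^{\bar k},H^{\bar k},A^{\bar k}}(d(x_{\overline{k-1}})\otimes h_{\bar k}\otimes x_{\bar k})$ and $c_{\bar k}=\mu_{B_{\bar k},H_{\bar k},A_{\bar k}}(d^*(y_{\overline{k+1}})\otimes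 h'_{\bar k}\otimes y_{\bar k})$ (here $d(x)$, $d^*(y)$ are images under the maps induced by the isomorphisms $d:A^{\bar k}\to B^{\overline{k+1}}$, $d^*:A_{\bar k}\to B_{\overline{k-1}}$). Set $\phi(c)=h_{\bar0}\otimes h_{\bar1}^{-1}\in\operatorname{Det}H^\bullet(d)$ and $\phi'(c)=h'_{\bar0}\otimes h'^{-1}_{\bar1}\in\operatorname{Det}H_\bullet(d^* )$ for $c=c_{\bar0}\otimes c_{\bar1}^{-1}$ (identifying $H^{\bar k}\cong H^{\bar k}(d)$, $H_{\bar k}\cong H_{\bar k}(d^* )$). The Cappell–Miller torsion is $\tau(C^\bullet,d,d^* )=(-1)^{S(C^\bullet)}\phi(c)\,(\phi'(c))^{-1}\in\operatorname{Det}(H^\bullet(d))\otimes\operatorname{Det}(H_\bullet(d^* ))^{-1}$, where $S(C^\bullet)=\sum_{k=0,1}[\dim B_{\overline{k-1}}\dim B^{\overline{k+1}}+\dim B^{\overline{k+1}}\dim H_{\bar k}+\dim B_{\overline{k-1}}\dim H^{\bar k}]$. $C_+^{\bar k}:=\operatorname{Ker}d^*\cap C^{\bar k}$, $C_-^{\bar k}:=\operatorname{Ker}d\cap C^{\bar k}$. *)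

theory Defs
  imports "Jordan_Normal_Form.Char_Poly"
begin

text \<open>Concrete model: C^0 = k^n0, C^1 = k^n1 (column vectors), maps given by matrices.
  d restricted to C^0 is D0 (n1 x n0), d restricted to C^1 is D1 (n0 x n1);
  d* restricted to C^0 is E0 (n1 x n0), d* restricted to C^1 is E1 (n0 x n1).\<close>

definition col_span :: "nat \<Rightarrow> 'a::field vec list \<Rightarrow> 'a vec set" where
  "col_span n vs = {mat_of_cols n vs *\<^sub>v c | c. c \<in> carrier_vec (length vs)}"

definition lin_indep_list :: "nat \<Rightarrow> 'a::field vec list \<Rightarrow> bool" where
  "lin_indep_list n vs = (set vs \<subseteq> carrier_vec n \<and>
     (\<forall>c \<in> carrier_vec (length vs). mat_of_cols n vs *\<^sub>v c = 0\<^sub>v n \<longrightarrow> c = 0\<^sub>v (length vs)))"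

definition ker_mat :: "nat \<Rightarrow> 'a::field mat \<Rightarrow> 'a vec set" where
  "ker_mat n A = {v \<in> carrier_vec n. A *\<^sub>v v = 0\<^sub>v (dim_row A)}"

definition im_mat :: "nat \<Rightarrow> 'a::field mat \<Rightarrow> 'a vec set" where
  "im_mat n A = (\<lambda>v. A *\<^sub>v v) ` carrier_vec n"

text \<open>Determinant of the restriction of A (n x n) to a subspace W of k^n, computed in a basis of W.\<close>
definition restr_det :: "nat \<Rightarrow> 'a::field mat \<Rightarrow> 'a vec set \<Rightarrow> 'a" where
  "restr_det n A W = (SOME x. \<exists>bs M. lin_indep_list n bs \<and> col_span n bs = W \<and>
      M \<in> carrier_mat (length bs) (length bs) \<and>
      A * mat_of_cols n bs = mat_of_cols n bs * M \<and> x = det M)"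

text \<open>Admissible choice data for the torsion at one degree k (in C^k = k^n):
  dxa = d applied to a basis of A^{k-1}, hb = basis of H^k, xa = basis of A^k,
  dk = d on C^k, dprev = d on C^{k-1} (from C^{k-1} of dimension m).\<close>
definition dec_ok :: "nat \<Rightarrow> nat \<Rightarrow> 'a::field mat \<Rightarrow> 'a mat \<Rightarrow> 'a vec list \<Rightarrow> 'a vec list \<Rightarrow> 'a vec list \<Rightarrow> bool" where
  "dec_ok m n dprev dk xprev hb xa =
     (set xprev \<subseteq> carrier_vec m \<and> set hb \<subseteq> carrier_vec n \<and> set xa \<subseteq> carrier_vec n \<and>
      length (map (\<lambda>v. dprev *\<^sub>v v) xprev @ hb @ xa) = n \<and>
      lin_indep_list n (map (\<lambda>v. dprev *\<^sub>v v) xprev @ hb @ xa) \<and>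
      col_span n (map (\<lambda>v. dprev *\<^sub>v v) xprev @ hb) = ker_mat n dk \<and>
      col_span n (map (\<lambda>v. dprev *\<^sub>v v) xprev) = im_mat m dprev)"

text \<open>The data: xa0, xa1 bases of A^0, A^1 (d-side), hb0, hb1 bases of H^0, H^1;
  ya0, ya1 bases of A_0, A_1 (d*-side), hc0, hc1 bases of H_0, H_1.\<close>
definition cm_data :: "nat \<Rightarrow> nat \<Rightarrow> 'a::field mat \<Rightarrow> 'a mat \<Rightarrow> 'a mat \<Rightarrow> 'a mat \<Rightarrow>
   'a vec list \<Rightarrow> 'a vec list \<Rightarrow> 'a vec list \<Rightarrow> 'a vec list \<Rightarrow>
   'a vec list \<Rightarrow> 'a vec list \<Rightarrow> 'a vec list \<Rightarrow> 'a vec list \<Rightarrow> bool" where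
  "cm_data n0 n1 D0 D1 E0 E1 xa0 xa1 hb0 hb1 ya0 ya1 hc0 hc1 =
     (dec_ok n1 n0 D1 D0 xa1 hb0 xa0 \<and> dec_ok n0 n1 D0 D1 xa0 hb1 xa1 \<and>
      dec_ok n1 n0 E1 E0 ya1 hc0 ya0 \<and> dec_ok n0 n1 E0 E1 ya0 hc1 ya1)"

text \<open>The scalar h (coefficient w.r.t. the wedge of the basis hb of H^k) determined by
  c = gamma * e_1 \<and> ... \<and> e_n = mu(d(x_{k-1}) \<otimes> h \<otimes> x_k).\<close>
definition h_coeff :: "nat \<Rightarrow> 'a::field \<Rightarrow> 'a mat \<Rightarrow> 'a vec list \<Rightarrow> 'a vec list \<Rightarrow> 'a vec list \<Rightarrow> 'a" where
  "h_coeff n \<gamma> dprev xprev hb xa = \<gamma> / det (mat_of_cols n (map (\<lambda>v. dprev *\<^sub>v v) xprev @ hb @ xa))"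

text \<open>Cappell--Miller torsion, as the coefficient of
  (wedge hb0 \<otimes> (wedge hb1)^{-1}) \<otimes> (wedge hc0 \<otimes> (wedge hc1)^{-1})^{-1};
  c_k = gamma_k times the standard volume element of k^{n_k}.\<close>
definition cm_torsion :: "nat \<Rightarrow> nat \<Rightarrow> 'a::field mat \<Rightarrow> 'a mat \<Rightarrow> 'a mat \<Rightarrow> 'a mat \<Rightarrow> 'a \<Rightarrow> 'a \<Rightarrow>
   'a vec list \<Rightarrow> 'a vec list \<Rightarrow> 'a vec list \<Rightarrow> 'a vec list \<Rightarrow>
   'a vec list \<Rightarrow> 'a vec list \<Rightarrow> 'a vec list \<Rightarrow> 'a vec list \<Rightarrow> 'a" where
  "cm_torsion n0 n1 D0 D1 E0 E1 \<gamma>0 \<gamma>1 xa0 xa1 hb0 hb1 ya0 ya1 hc0 hc1 =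
    (let h0 = h_coeff n0 \<gamma>0 D1 xa1 hb0 xa0;
         h1 = h_coeff n1 \<gamma>1 D0 xa0 hb1 xa1;
         h0' = h_coeff n0 \<gamma>0 E1 ya1 hc0 ya0;
         h1' = h_coeff n1 \<gamma>1 E0 ya0 hc1 ya1;
         S = length ya0 * length xa0 + length xa0 * length hc0 + length ya0 * length hb0
           + length ya1 * length xa1 + length xa1 * length hc1 + length ya1 * length hb1
     in (-1) ^ S * ((h0 / h1) / (h0' / h1')))"

end

theory Submission imports Defs begin

(*
  Here C^0 = k^n0, C^1 = k^n1, d = (D0, D1), d* = (E0, E1), and the hypothesis says that the
  diagonal Laplacian blocks L0 = E1 D0 + D1 E0 and L1 = E0 D1 + D0 E1 are nonsingular.  As in
  Hodge theory, every v in ker D equals D' E (L^-1 v) with L^-1 v again in ker D; this gives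
  ker d = im d, ker d* = im d* (kernel_eq_image) and the bijectivity of d*d = E1 D0 on ker E0,
  where it agrees with the invertible L0 (kernel_bij).

  For the torsion, acyclicity makes the cohomology bases empty, so the torsion is a ratio of
  the determinants of the d-adapted bases P0 = [D1 X1 | X0], P1 = [D0 X0 | X1] and the
  d*-adapted bases Q0, Q1.  Expanding E1 Y1 and E0 Y0 in the d-adapted bases gives coefficient
  blocks K', K on the complements, which are nonsingular because there are no harmonic vectors
  (dual_basis_expansion).  Factoring [D0 E1 Y1 | E0 Y0] once through P1 and once through Q1
  yields det Q1 * det(E1 D0 on ker E0) = det P1 * det K' * det K * det(block swap)
  (degree_det_identity), symmetrically in degree 0, and the common factor cancels.
*)

section \<open>Matrices built from column blocks\<close>

definition hcat :: "'a::zero mat \<Rightarrow> 'a mat \<Rightarrow> 'a mat" where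
  "hcat A B = four_block_mat A B (0\<^sub>m 0 (dim_col A)) (0\<^sub>m 0 (dim_col B))"

lemma dim_hcat [simp]:
  "dim_row (hcat A B) = dim_row A" "dim_col (hcat A B) = dim_col A + dim_col B"
  unfolding hcat_def by auto

lemma hcat_carrier [simp, intro]:
  "A \<in> carrier_mat n a \<Longrightarrow> B \<in> carrier_mat n b \<Longrightarrow> hcat A B \<in> carrier_mat n (a + b)"
  unfolding hcat_def by (metis add_0_right carrier_matD(2) four_block_carrier_mat zero_carrier_mat)

lemma hcat_zero_cols: "A \<in> carrier_mat n a \<Longrightarrow> E \<in> carrier_mat n 0 \<Longrightarrow> hcat A E = A"
  by (rule eq_matI, auto simp: hcat_def)

lemma hcat_mult:
  fixes A :: "'a::comm_ring_1 mat"
  assumes A: "A \<in> carrier_mat n a" and B: "B \<in> carrier_mat n b"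
    and G: "G \<in> carrier_mat a c" and H: "H \<in> carrier_mat a d"
    and K: "K \<in> carrier_mat b c" and L: "L \<in> carrier_mat b d"
  shows "hcat A B * four_block_mat G H K L = hcat (A * G + B * K) (A * H + B * L)"
proof -
  have "hcat A B * four_block_mat G H K L = four_block_mat (A * G + B * K) (A * H + B * L)
     (0\<^sub>m 0 a * G + 0\<^sub>m 0 b * K) (0\<^sub>m 0 a * H + 0\<^sub>m 0 b * L)"
    unfolding hcat_def using A B
    by (simp add: mult_four_block_mat[OF A B zero_carrier_mat[of 0 a] zero_carrier_mat[of 0 b] G H K L])
  also have "0\<^sub>m 0 a * G + 0\<^sub>m 0 b * K = 0\<^sub>m 0 c" by (rule eq_matI, insert G K, auto)
  also have "0\<^sub>m 0 a * H + 0\<^sub>m 0 b * L = 0\<^sub>m 0 d" by (rule eq_matI, insert H L, auto)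
  finally show ?thesis unfolding hcat_def using A B G H K L by auto
qed

lemma mult_hcat:
  fixes A :: "'a::comm_ring_1 mat"
  assumes M: "M \<in> carrier_mat m n" and A: "A \<in> carrier_mat n a" and B: "B \<in> carrier_mat n b"
  shows "M * hcat A B = hcat (M * A) (M * B)"
proof (rule eq_matI)
  fix i j assume i: "i < dim_row (hcat (M * A) (M * B))" and j: "j < dim_col (hcat (M * A) (M * B))"
  have ij: "i < m" "j < a + b" using i j M A B by (auto simp: hcat_def)
  show "(M * hcat A B) $$ (i, j) = hcat (M * A) (M * B) $$ (i, j)"
  proof (cases "j < a")
    case True
    have "col (hcat A B) j = col A j"
      using A B True by (intro eq_vecI, auto simp: hcat_def)
    thus ?thesis using True ij M A B by (auto simp: hcat_def)
  next
    case False
    have "col (hcat A B) j = col B (j - a)"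
      using A B False ij by (intro eq_vecI, auto simp: hcat_def)
    thus ?thesis using False ij M A B by (auto simp: hcat_def)
  qed
qed (insert M A B, auto simp: hcat_def)

lemma hcat_mult_vec:
  fixes A :: "'a::comm_ring_1 mat"
  assumes A: "A \<in> carrier_mat n a" and B: "B \<in> carrier_mat n b"
    and x: "x \<in> carrier_vec a" and y: "y \<in> carrier_vec b"
  shows "hcat A B *\<^sub>v (x @\<^sub>v y) = A *\<^sub>v x + B *\<^sub>v y"
proof -
  have "hcat A B *\<^sub>v (x @\<^sub>v y) = (A *\<^sub>v x + B *\<^sub>v y) @\<^sub>v (0\<^sub>m 0 a *\<^sub>v x + 0\<^sub>m 0 b *\<^sub>v y)"
    unfolding hcat_def using A B
    by (simp add: four_block_mat_mult_vec[OF A B zero_carrier_mat[of 0 a] zero_carrier_mat[of 0 b] x y])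
  also have "\<dots> = A *\<^sub>v x + B *\<^sub>v y" by (rule eq_vecI, insert A B x y, auto)
  finally show ?thesis .
qed

lemma mult_zero_vec [simp]: "A \<in> carrier_mat nr nc \<Longrightarrow> A *\<^sub>v 0\<^sub>v nc = 0\<^sub>v nr"
  by (rule eq_vecI, auto)

lemma zero_mat_mult_vec [simp]: "v \<in> carrier_vec nc \<Longrightarrow> 0\<^sub>m nr nc *\<^sub>v v = 0\<^sub>v nr"
  by (rule eq_vecI, auto)

lemma mat_of_cols_append:
  "mat_of_cols n (xs @ ys) = hcat (mat_of_cols n xs) (mat_of_cols n ys)"
  by (rule eq_matI, auto simp: hcat_def mat_of_cols_index nth_append)

lemma mat_of_cols_map:
  assumes A: "A \<in> carrier_mat n m" and vs: "set vs \<subseteq> carrier_vec m"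
  shows "mat_of_cols n (map (\<lambda>v. A *\<^sub>v v) vs) = A * mat_of_cols m vs"
proof (rule eq_matI)
  fix i j assume i: "i < dim_row (A * mat_of_cols m vs)" and j: "j < dim_col (A * mat_of_cols m vs)"
  hence j': "j < length vs" and i': "i < n" using A by auto
  have "col (mat_of_cols m vs) j = vs ! j" using j' vs by (intro col_mat_of_cols, auto)
  thus "mat_of_cols n (map (\<lambda>v. A *\<^sub>v v) vs) $$ (i, j) = (A * mat_of_cols m vs) $$ (i, j)"
    using i' j' A by (auto simp: mat_of_cols_index)
qed (insert A, auto)

definition block_swap :: "nat \<Rightarrow> nat \<Rightarrow> 'a::{zero,one} mat" where
  "block_swap p q = four_block_mat (0\<^sub>m p q) (1\<^sub>m p) (1\<^sub>m q) (0\<^sub>m q p)"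

lemma block_swap_carrier: "block_swap p q \<in> carrier_mat (p + q) (p + q)"
  unfolding block_swap_def by (auto simp: add.commute)

lemma hcat_block_swap:
  fixes Z :: "'a::comm_ring_1 mat"
  assumes Z: "Z \<in> carrier_mat n p" and A: "A \<in> carrier_mat n q"
  shows "hcat Z A * block_swap p q = hcat A Z"
  unfolding block_swap_def using Z A by (subst hcat_mult[OF Z A], auto)

text \<open>Transposition exchanges the two swaps, so they have the same determinant.\<close>
lemma det_block_swap_sym: "det (block_swap q p :: 'a::idom mat) = det (block_swap p q)"
proof -
  have S: "(block_swap p q :: 'a mat) \<in> carrier_mat (p + q) (p + q)" by (rule block_swap_carrier)
  have "transpose_mat (block_swap p q) = (block_swap q p :: 'a mat)" unfolding block_swap_def
    by (subst transpose_four_block_mat, auto)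
  with det_transpose[OF S] show ?thesis by simp
qed

text \<open>The two swaps are mutually inverse, so their determinants are nonzero.\<close>
lemma det_block_swap_nonzero: "det (block_swap p q :: 'a::idom mat) \<noteq> 0"
proof -
  have S: "(block_swap p q :: 'a mat) \<in> carrier_mat (p + q) (p + q)" by (rule block_swap_carrier)
  have S': "(block_swap q p :: 'a mat) \<in> carrier_mat (p + q) (p + q)"
    using block_swap_carrier[of q p] by (simp add: add.commute)
  have "block_swap p q * block_swap q p = four_block_mat
     (0\<^sub>m p q * 0\<^sub>m q p + 1\<^sub>m p * 1\<^sub>m p) (0\<^sub>m p q * 1\<^sub>m q + 1\<^sub>m p * 0\<^sub>m p q)
     (1\<^sub>m q * 0\<^sub>m q p + 0\<^sub>m q p * 1\<^sub>m p) (1\<^sub>m q * 1\<^sub>m q + 0\<^sub>m q p * 0\<^sub>m p q :: 'a mat)"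
    unfolding block_swap_def by (rule mult_four_block_mat, auto)
  also have "\<dots> = 1\<^sub>m (p + q)" by simp
  finally have "det (block_swap p q :: 'a mat) * det (block_swap q p) = 1"
    using det_mult[OF S S'] by simp
  thus ?thesis by auto
qed

section \<open>Injective matrices and spans of column lists\<close>

definition injm :: "nat \<Rightarrow> 'a::field mat \<Rightarrow> bool" where
  "injm k A = (\<forall>c\<in>carrier_vec k. A *\<^sub>v c = 0\<^sub>v (dim_row A) \<longrightarrow> c = 0\<^sub>v k)"

lemma lin_indep_injm:
  "lin_indep_list n vs \<longleftrightarrow> set vs \<subseteq> carrier_vec n \<and> injm (length vs) (mat_of_cols n vs)"
  unfolding lin_indep_list_def injm_def by auto

lemma lin_indep_carrier: "lin_indep_list n vs \<Longrightarrow> set vs \<subseteq> carrier_vec n"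
  unfolding lin_indep_list_def by auto

lemma injm_det: assumes A: "(A::'a::field mat) \<in> carrier_mat n n"
  shows "injm n A \<longleftrightarrow> det A \<noteq> 0"
  unfolding injm_def det_0_iff_vec_prod_zero_field[OF A] using A by auto

lemma lin_indep_det: "lin_indep_list n vs \<Longrightarrow> length vs = n \<Longrightarrow> det (mat_of_cols n vs) \<noteq> 0"
  using injm_det[of "mat_of_cols n vs" n] unfolding lin_indep_injm by auto

lemma inverse_exists: assumes A: "(A::'a::field mat) \<in> carrier_mat n n" and d: "det A \<noteq> 0"
  shows "\<exists>B\<in>carrier_mat n n. A * B = 1\<^sub>m n \<and> B * A = 1\<^sub>m n"
  using det_non_zero_imp_unit[OF A d, of "()"] unfolding Units_def ring_mat_def by auto

text \<open>A matrix with more columns than rows has a nontrivial kernel: pad it with zero rows to a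
  square matrix, whose determinant then vanishes.\<close>
lemma wide_kernel: assumes C: "(C::'a::field mat) \<in> carrier_mat a k" and ak: "a < k"
  shows "\<exists>x\<in>carrier_vec k. x \<noteq> 0\<^sub>v k \<and> C *\<^sub>v x = 0\<^sub>v a"
proof -
  define C' where "C' = C @\<^sub>r 0\<^sub>m (k - a) k"
  have C': "C' \<in> carrier_mat k k" unfolding C'_def using C ak
    by (metis carrier_append_rows le_add_diff_inverse less_imp_le_nat zero_carrier_mat)
  have k1: "k - 1 < k" using ak by auto
  have "multrow (k - 1) 0 C' = C'"
  proof (rule eq_matI)
    fix i j assume i: "i < dim_row C'" and j: "j < dim_col C'"
    show "multrow (k - 1) 0 C' $$ (i, j) = C' $$ (i, j)"
    proof (cases "i = k - 1")
      case True
      have "C' $$ (i, j) = 0" using True i j C ak C' unfolding C'_def append_rows_def by auto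
      thus ?thesis using i j True by simp
    qed (insert i j, auto)
  qed auto
  hence "det C' = 0" using det_multrow[OF k1 C', of 0] by simp
  then obtain x where x: "x \<in> carrier_vec k" "x \<noteq> 0\<^sub>v k" "C' *\<^sub>v x = 0\<^sub>v k"
    using det_0_iff_vec_prod_zero_field[OF C'] by auto
  have "(C *\<^sub>v x) @\<^sub>v 0\<^sub>v (k - a) = C' *\<^sub>v x"
    unfolding C'_def using mat_mult_append[OF C zero_carrier_mat[of "k - a" k] x(1)] x(1) by simp
  also have "\<dots> = 0\<^sub>v a @\<^sub>v 0\<^sub>v (k - a)" using x(3) ak by (intro eq_vecI, auto)
  finally have "C *\<^sub>v x = 0\<^sub>v a" using C x by (subst (asm) append_vec_eq[of _ a], auto)
  thus ?thesis using x by auto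
qed

lemma injm_cols_le: assumes "injm q K" and K: "K \<in> carrier_mat p q"
  shows "q \<le> p"
proof (rule ccontr)
  assume "\<not> q \<le> p"
  then obtain x where "x \<in> carrier_vec q" "x \<noteq> 0\<^sub>v q" "K *\<^sub>v x = 0\<^sub>v p" using wide_kernel[OF K] by auto
  thus False using assms unfolding injm_def by auto
qed

lemma injm_prefix:
  fixes A :: "'a::field mat"
  assumes A: "A \<in> carrier_mat n a" and B: "B \<in> carrier_mat n b" and inj: "injm (a + b) (hcat A B)"
  shows "injm a A"
  unfolding injm_def
proof (intro ballI impI)
  fix c assume c: "c \<in> carrier_vec a" and Ac: "A *\<^sub>v c = 0\<^sub>v (dim_row A)"
  have "hcat A B *\<^sub>v (c @\<^sub>v 0\<^sub>v b) = A *\<^sub>v c + B *\<^sub>v 0\<^sub>v b" by (rule hcat_mult_vec[OF A B c], auto)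
  also have "\<dots> = 0\<^sub>v (dim_row (hcat A B))" using Ac A B by auto
  finally have "c @\<^sub>v 0\<^sub>v b = 0\<^sub>v (a + b)" using inj c unfolding injm_def by auto
  also have "0\<^sub>v (a + b) = 0\<^sub>v a @\<^sub>v (0\<^sub>v b :: 'a vec)" by (intro eq_vecI, auto)
  finally show "c = 0\<^sub>v a" using c by (subst (asm) append_vec_eq[of _ a], auto)
qed

lemma lin_indep_prefix: "lin_indep_list n (xs @ ys) \<Longrightarrow> lin_indep_list n xs"
  unfolding lin_indep_injm mat_of_cols_append
  by (auto intro: injm_prefix[of _ n _ "mat_of_cols n ys" "length ys"])

lemma injm_cancel:
  fixes V :: "'a::field mat"
  assumes inj: "injm k V" and V: "V \<in> carrier_mat n k"
    and C: "C \<in> carrier_mat k m" and C': "C' \<in> carrier_mat k m" and eq: "V * C = V * C'"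
  shows "C = C'"
proof (rule eq_matI)
  fix i j assume i: "i < dim_row C'" and j: "j < dim_col C'"
  have cj: "col C j \<in> carrier_vec k" "col C' j \<in> carrier_vec k" using C C' by auto
  have "V *\<^sub>v col C j = V *\<^sub>v col C' j"
    using eq col_mult2[OF V C, of j] col_mult2[OF V C', of j] j C' by auto
  hence "V *\<^sub>v (col C j - col C' j) = 0\<^sub>v n" using V cj by (subst mult_minus_distrib_mat_vec[OF V], auto)
  hence "col C j - col C' j = 0\<^sub>v k" using inj V cj unfolding injm_def by auto
  hence "(col C j - col C' j) $ i = 0" using i C' by simp
  thus "C $$ (i, j) = C' $$ (i, j)" using i j C C' by simp
qed (insert C C', auto)

lemma col_span_self: assumes vs: "set vs \<subseteq> carrier_vec n"
  shows "set vs \<subseteq> col_span n vs"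
proof
  fix v assume v: "v \<in> set vs"
  obtain j where j: "j < length vs" "v = vs ! j" using v by (metis in_set_conv_nth)
  have "mat_of_cols n vs *\<^sub>v unit_vec (length vs) j = v"
  proof (rule eq_vecI)
    fix i assume "i < dim_vec v"
    hence i: "i < n" using vs v by auto
    show "(mat_of_cols n vs *\<^sub>v unit_vec (length vs) j) $ i = v $ i"
      using i j by (simp add: mat_of_cols_index)
  qed (insert vs v, auto)
  thus "v \<in> col_span n vs" unfolding col_span_def by (intro CollectI exI[of _ "unit_vec (length vs) j"], auto)
qed

lemma span_factor:
  assumes ws: "set ws \<subseteq> col_span n vs"
  shows "\<exists>C\<in>carrier_mat (length vs) (length ws). mat_of_cols n ws = mat_of_cols n vs * C"
proof -
  have "\<forall>w\<in>set ws. \<exists>c. c \<in> carrier_vec (length vs) \<and> w = mat_of_cols n vs *\<^sub>v c"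
    using ws unfolding col_span_def by auto
  then obtain f where f: "\<And>w. w \<in> set ws \<Longrightarrow> f w \<in> carrier_vec (length vs) \<and> w = mat_of_cols n vs *\<^sub>v f w"
    by metis
  define C where "C = mat_of_cols (length vs) (map f ws)"
  have C: "C \<in> carrier_mat (length vs) (length ws)" unfolding C_def by auto
  have "mat_of_cols n vs * C = mat_of_cols n (map (\<lambda>v. mat_of_cols n vs *\<^sub>v v) (map f ws))"
    unfolding C_def by (rule mat_of_cols_map[symmetric], insert f, auto)
  also have "map (\<lambda>v. mat_of_cols n vs *\<^sub>v v) (map f ws) = ws"
    unfolding map_map by (rule map_idI, unfold o_def, metis f)
  finally show ?thesis using C by (intro bexI[of _ C], auto)
qed

lemma independent_in_span_empty:
  fixes as :: "'a::field vec list"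
  assumes li: "lin_indep_list n (as @ bs)" and sp: "set bs \<subseteq> col_span n as"
  shows "bs = []"
proof (rule ccontr)
  assume ne: "bs \<noteq> []"
  define A where "A = mat_of_cols n as"
  define B where "B = mat_of_cols n bs"
  let ?a = "length as" let ?b = "length bs"
  have A: "A \<in> carrier_mat n ?a" and B: "B \<in> carrier_mat n ?b" unfolding A_def B_def by auto
  obtain C where C: "C \<in> carrier_mat ?a ?b" and BC: "B = A * C"
    using span_factor[OF sp] unfolding A_def B_def by auto
  have inj: "injm (?a + ?b) (hcat A B)"
    using li unfolding lin_indep_injm A_def B_def mat_of_cols_append by auto
  have HC: "hcat (1\<^sub>m ?a) C \<in> carrier_mat ?a (?a + ?b)" using C by auto
  obtain x where x: "x \<in> carrier_vec (?a + ?b)" "x \<noteq> 0\<^sub>v (?a + ?b)" "hcat (1\<^sub>m ?a) C *\<^sub>v x = 0\<^sub>v ?a"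
    using wide_kernel[OF HC] ne by auto
  have "hcat A B = A * hcat (1\<^sub>m ?a) C" unfolding BC using A C by (subst mult_hcat[OF A], auto)
  hence "hcat A B *\<^sub>v x = A *\<^sub>v (hcat (1\<^sub>m ?a) C *\<^sub>v x)" using A HC x by auto
  also have "\<dots> = 0\<^sub>v (dim_row (hcat A B))" using x A B by (auto simp: hcat_def)
  finally show False using inj x unfolding injm_def by auto
qed

lemma hcat_basis_decomp:
  fixes A :: "'a::field mat"
  assumes A: "A \<in> carrier_mat n a" and B: "B \<in> carrier_mat n b" and n: "a + b = n"
    and d: "det (hcat A B) \<noteq> 0" and Z: "Z \<in> carrier_mat n c"
  obtains H K where "H \<in> carrier_mat a c" and "K \<in> carrier_mat b c" and "Z = A * H + B * K"
proof -
  have V: "hcat A B \<in> carrier_mat n n" using hcat_carrier[OF A B] n by simp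
  obtain W where W: "W \<in> carrier_mat n n" "hcat A B * W = 1\<^sub>m n" using inverse_exists[OF V d] by auto
  define N where "N = W * Z"
  have N: "N \<in> carrier_mat (a + b) (c + 0)" using W Z n unfolding N_def by auto
  obtain H X K Y where sb: "split_block N a c = (H, X, K, Y)" by (metis prod_cases4)
  have dims: "dim_row N = a + b" "dim_col N = c + 0" using N by auto
  note sp = split_block[OF sb dims]
  have "Z = hcat A B * N" unfolding N_def using V W Z by (simp add: assoc_mult_mat[symmetric])
  also have "\<dots> = hcat (A * H + B * K) (A * X + B * Y)" unfolding sp(5) by (rule hcat_mult[OF A B sp(1-4)])
  also have "\<dots> = A * H + B * K" by (rule hcat_zero_cols, insert A B sp, auto)
  finally show ?thesis using sp that by blast
qed

lemma left_inverse_injm: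
  fixes T :: "'a::field mat"
  assumes T: "T \<in> carrier_mat m k" and S: "S \<in> carrier_mat k m" and ST: "S * T = 1\<^sub>m k"
  shows "injm k T"
  unfolding injm_def
proof (intro ballI impI)
  fix x assume x: "x \<in> carrier_vec k" and Tx: "T *\<^sub>v x = 0\<^sub>v (dim_row T)"
  have "x = (S * T) *\<^sub>v x" using ST x by auto
  also have "\<dots> = S *\<^sub>v (T *\<^sub>v x)" using S T x by auto
  finally show "x = 0\<^sub>v k" using Tx S T by auto
qed

lemma span_basis_change:
  assumes li0: "lin_indep_list n bs0" and li: "lin_indep_list n bs"
    and sp: "col_span n bs = col_span n bs0"
  obtains T where "length bs = length bs0" and "T \<in> carrier_mat (length bs0) (length bs0)"
    and "mat_of_cols n bs = mat_of_cols n bs0 * T" and "det T \<noteq> 0"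
proof -
  define B0 where "B0 = mat_of_cols n bs0"
  define B where "B = mat_of_cols n bs"
  let ?m = "length bs0" let ?k = "length bs"
  have B0: "B0 \<in> carrier_mat n ?m" and B: "B \<in> carrier_mat n ?k" unfolding B0_def B_def by auto
  have inj0: "injm ?m B0" and inj: "injm ?k B" using li0 li unfolding lin_indep_injm B0_def B_def by auto
  have "set bs \<subseteq> col_span n bs0" using col_span_self[OF lin_indep_carrier[OF li]] sp by auto
  then obtain T where T: "T \<in> carrier_mat ?m ?k" and BT: "B = B0 * T"
    using span_factor unfolding B_def B0_def by blast
  have "set bs0 \<subseteq> col_span n bs" using col_span_self[OF lin_indep_carrier[OF li0]] sp by auto
  then obtain S where S: "S \<in> carrier_mat ?k ?m" and BS: "B0 = B * S"
    using span_factor unfolding B_def B0_def by blast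
  have "B0 * (T * S) = B0 * 1\<^sub>m ?m" using B0 T S BT BS by (metis assoc_mult_mat right_mult_one_mat)
  hence TS: "T * S = 1\<^sub>m ?m" using injm_cancel[OF inj0 B0, of "T * S" ?m "1\<^sub>m ?m"] T S by auto
  have "B * (S * T) = B * 1\<^sub>m ?k" using B T S BT BS by (metis assoc_mult_mat right_mult_one_mat)
  hence ST: "S * T = 1\<^sub>m ?k" using injm_cancel[OF inj B, of "S * T" ?k "1\<^sub>m ?k"] T S by auto
  have "?k \<le> ?m" by (rule injm_cols_le[OF left_inverse_injm[OF T S ST] T])
  moreover have "?m \<le> ?k" by (rule injm_cols_le[OF left_inverse_injm[OF S T TS] S])
  ultimately have k: "?k = ?m" by simp
  have "det T * det S = 1" using det_mult[of T ?m S] T S TS k by simp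
  hence "det T \<noteq> 0" by auto
  thus ?thesis using that k T BT unfolding B_def B0_def by simp
qed

text \<open>restr_det is well defined: any basis of W and any matrix of A in that basis give the same
  determinant (similar matrices have equal determinants).\<close>
lemma restr_det_eq:
  fixes A :: "'a::field mat"
  assumes A: "A \<in> carrier_mat n n" and li: "lin_indep_list n bs0" and sp: "col_span n bs0 = W"
    and M0: "M0 \<in> carrier_mat (length bs0) (length bs0)"
    and eq: "A * mat_of_cols n bs0 = mat_of_cols n bs0 * M0"
  shows "restr_det n A W = det M0"
proof -
  let ?P = "\<lambda>x. \<exists>bs M. lin_indep_list n bs \<and> col_span n bs = W \<and>
      M \<in> carrier_mat (length bs) (length bs) \<and>
      A * mat_of_cols n bs = mat_of_cols n bs * M \<and> x = det M"
  have "?P (det M0)" using li sp M0 eq by blast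
  hence "?P (restr_det n A W)" unfolding restr_det_def by (rule someI)
  then obtain bs M where li': "lin_indep_list n bs" and sp': "col_span n bs = W"
    and M: "M \<in> carrier_mat (length bs) (length bs)"
    and eq': "A * mat_of_cols n bs = mat_of_cols n bs * M" and x: "restr_det n A W = det M" by blast
  define B0 where "B0 = mat_of_cols n bs0"
  let ?k = "length bs0"
  obtain T where k: "length bs = ?k" and T: "T \<in> carrier_mat ?k ?k"
    and BT: "mat_of_cols n bs = B0 * T" and dT: "det T \<noteq> 0"
    using span_basis_change[OF li li'] sp sp' unfolding B0_def by metis
  have B0: "B0 \<in> carrier_mat n ?k" unfolding B0_def by auto
  have inj0: "injm ?k B0" using li unfolding lin_indep_injm B0_def by auto
  have Msq: "M \<in> carrier_mat ?k ?k" using M k by simp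
  have "B0 * (M0 * T) = A * (B0 * T)" using eq A B0 M0 T unfolding B0_def
    by (metis assoc_mult_mat)
  also have "\<dots> = B0 * (T * M)" using eq' BT B0 T Msq by (metis assoc_mult_mat)
  finally have "M0 * T = T * M" using injm_cancel[OF inj0 B0, of "M0 * T" ?k "T * M"] M0 T Msq by auto
  hence "det M0 * det T = det T * det M" by (metis det_mult[OF M0 T] det_mult[OF T Msq])
  thus ?thesis using x dT by simp
qed

section \<open>Consequences of an invertible Laplacian\<close>

text \<open>Throughout, D : k^n \<rightarrow> k^n' and D' : k^n' \<rightarrow> k^n are the two components of one
  differential, E, E' those of the other, and E' D + D' E is the Laplacian on k^n.\<close>

lemma zero_eigenvalue_iff_singular:
  fixes M :: "'a::field mat"
  assumes M: "M \<in> carrier_mat n n"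
  shows "eigenvalue M 0 \<longleftrightarrow> det M = 0"
proof -
  have "char_matrix M 0 = M" unfolding char_matrix_def using M by (intro eq_matI, auto)
  thus ?thesis using eigenvalue_det[OF M] by simp
qed

lemma laplacian_blocks_nonsingular:
  fixes L0 L1 :: "'a::field mat"
  assumes L0: "L0 \<in> carrier_mat n0 n0" and L1: "L1 \<in> carrier_mat n1 n1"
    and lap: "\<not> eigenvalue (four_block_mat L0 (0\<^sub>m n0 n1) (0\<^sub>m n1 n0) L1) 0"
  shows "det L0 \<noteq> 0" and "det L1 \<noteq> 0"
proof -
  let ?M = "four_block_mat L0 (0\<^sub>m n0 n1) (0\<^sub>m n1 n0) L1"
  have M: "?M \<in> carrier_mat (n0 + n1) (n0 + n1)" using L0 L1 by auto
  have "det ?M = det L0 * det L1" by (rule det_four_block_mat_lower_left_zero[OF L0 _ _ L1], auto)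
  moreover have "det ?M \<noteq> 0" using lap zero_eigenvalue_iff_singular[OF M] by simp
  ultimately show "det L0 \<noteq> 0" and "det L1 \<noteq> 0" by auto
qed

lemma laplacian_mult_vec:
  fixes D :: "'a::field mat"
  assumes D: "D \<in> carrier_mat n' n" and D': "D' \<in> carrier_mat n n'"
    and E: "E \<in> carrier_mat n' n" and E': "E' \<in> carrier_mat n n'" and x: "x \<in> carrier_vec n"
  shows "(E' * D + D' * E) *\<^sub>v x = E' *\<^sub>v (D *\<^sub>v x) + D' *\<^sub>v (E *\<^sub>v x)"
  using D D' E E' x by (subst add_mult_distrib_mat_vec[of _ n n], auto)

lemma nonsingular_kernel_trivial:
  fixes A :: "'a::field mat"
  assumes "A \<in> carrier_mat n n" and "det A \<noteq> 0" and "x \<in> carrier_vec n" and "A *\<^sub>v x = 0\<^sub>v n"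
  shows "x = 0\<^sub>v n"
  using assms injm_det[of A n] unfolding injm_def by auto

lemma no_harmonic_vectors:
  fixes D :: "'a::field mat"
  assumes D: "D \<in> carrier_mat n' n" and D': "D' \<in> carrier_mat n n'"
    and E: "E \<in> carrier_mat n' n" and E': "E' \<in> carrier_mat n n'"
    and L: "det (E' * D + D' * E) \<noteq> 0"
    and x: "x \<in> carrier_vec n" and Dx: "D *\<^sub>v x = 0\<^sub>v n'" and Ex: "E *\<^sub>v x = 0\<^sub>v n'"
  shows "x = 0\<^sub>v n"
proof (rule nonsingular_kernel_trivial[OF _ L x])
  show "E' * D + D' * E \<in> carrier_mat n n" using D D' E E' by auto
  show "(E' * D + D' * E) *\<^sub>v x = 0\<^sub>v n"
    unfolding laplacian_mult_vec[OF D D' E E' x] Dx Ex using D' E' by simp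
qed

lemma laplacian_on_kernel:
  fixes D :: "'a::field mat"
  assumes D: "D \<in> carrier_mat n' n" and D': "D' \<in> carrier_mat n n'"
    and E: "E \<in> carrier_mat n' n" and E': "E' \<in> carrier_mat n n'" and v: "v \<in> ker_mat n D"
  shows "(E' * D + D' * E) *\<^sub>v v = (D' * E) *\<^sub>v v"
proof -
  have "v \<in> carrier_vec n" "D *\<^sub>v v = 0\<^sub>v n'" using v D unfolding ker_mat_def by auto
  thus ?thesis using laplacian_mult_vec[OF D D' E E'] D D' E E' by simp
qed

text \<open>Hodge decomposition, kernel part: the inverse Laplacian maps ker D into ker D, so every
  v in ker D is D' E w for some w in ker D.\<close>
lemma kernel_in_image:
  fixes D :: "'a::field mat"
  assumes D: "D \<in> carrier_mat n' n" and D': "D' \<in> carrier_mat n n'"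
    and E: "E \<in> carrier_mat n' n" and E': "E' \<in> carrier_mat n n'"
    and DD': "D * D' = 0\<^sub>m n' n'" and D'D: "D' * D = 0\<^sub>m n n"
    and L: "det (E' * D + D' * E) \<noteq> 0" and L': "det (E * D' + D * E') \<noteq> 0"
    and v: "v \<in> ker_mat n D"
  shows "\<exists>w\<in>ker_mat n D. v = (D' * E) *\<^sub>v w"
proof -
  let ?L = "E' * D + D' * E"
  have Lc: "?L \<in> carrier_mat n n" using D D' E E' by auto
  have vc: "v \<in> carrier_vec n" and Dv: "D *\<^sub>v v = 0\<^sub>v n'" using v D unfolding ker_mat_def by auto
  obtain Li where Li: "Li \<in> carrier_mat n n" "?L * Li = 1\<^sub>m n" using inverse_exists[OF Lc L] by auto
  define w where "w = Li *\<^sub>v v"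
  have w: "w \<in> carrier_vec n" unfolding w_def using Li vc by auto
  have Lw: "?L *\<^sub>v w = v" unfolding w_def using Li Lc vc by (simp flip: assoc_mult_mat_vec)
  define u where "u = D *\<^sub>v w"
  have u: "u \<in> carrier_vec n'" unfolding u_def using D w by auto
  have "D *\<^sub>v v = D *\<^sub>v (E' *\<^sub>v u) + (D * D') *\<^sub>v (E *\<^sub>v w)"
    unfolding Lw[symmetric] laplacian_mult_vec[OF D D' E E' w] u_def[symmetric]
    using D D' E E' w u by (subst mult_add_distrib_mat_vec[of _ n' n], auto)
  hence "D *\<^sub>v (E' *\<^sub>v u) = 0\<^sub>v n'" using Dv DD' D E' E w u by simp
  moreover have "D' *\<^sub>v u = 0\<^sub>v n" unfolding u_def using D'D D D' w by (simp flip: assoc_mult_mat_vec)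
  ultimately have "u = 0\<^sub>v n'"
    using nonsingular_kernel_trivial[OF _ L' u] laplacian_mult_vec[OF D' D E' E u] D D' E E' by auto
  hence "w \<in> ker_mat n D" using w D unfolding u_def ker_mat_def by auto
  moreover have "v = (D' * E) *\<^sub>v w"
    using Lw laplacian_on_kernel[OF D D' E E' \<open>w \<in> ker_mat n D\<close>] by simp
  ultimately show ?thesis by blast
qed

lemma kernel_eq_image:
  fixes D :: "'a::field mat"
  assumes D: "D \<in> carrier_mat n' n" and D': "D' \<in> carrier_mat n n'"
    and E: "E \<in> carrier_mat n' n" and E': "E' \<in> carrier_mat n n'"
    and DD': "D * D' = 0\<^sub>m n' n'" and D'D: "D' * D = 0\<^sub>m n n"
    and L: "det (E' * D + D' * E) \<noteq> 0" and L': "det (E * D' + D * E') \<noteq> 0"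
  shows "ker_mat n D = im_mat n' D'"
proof
  show "ker_mat n D \<subseteq> im_mat n' D'"
  proof
    fix v assume "v \<in> ker_mat n D"
    then obtain w where "w \<in> ker_mat n D" "v = (D' * E) *\<^sub>v w"
      using kernel_in_image[OF D D' E E' DD' D'D L L'] by blast
    thus "v \<in> im_mat n' D'" unfolding im_mat_def ker_mat_def using D' E by auto
  qed
  show "im_mat n' D' \<subseteq> ker_mat n D"
  proof
    fix v assume "v \<in> im_mat n' D'"
    then obtain u where u: "u \<in> carrier_vec n'" "v = D' *\<^sub>v u" unfolding im_mat_def by auto
    have "D *\<^sub>v v = (D * D') *\<^sub>v u" using u D D' by simp
    thus "v \<in> ker_mat n D" unfolding ker_mat_def using u D D' DD' by simp
  qed
qed

lemma kernel_bij:
  fixes D :: "'a::field mat"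
  assumes D: "D \<in> carrier_mat n' n" and D': "D' \<in> carrier_mat n n'"
    and E: "E \<in> carrier_mat n' n" and E': "E' \<in> carrier_mat n n'"
    and DD': "D * D' = 0\<^sub>m n' n'" and D'D: "D' * D = 0\<^sub>m n n"
    and L: "det (E' * D + D' * E) \<noteq> 0" and L': "det (E * D' + D * E') \<noteq> 0"
  shows "bij_betw (\<lambda>v. (D' * E) *\<^sub>v v) (ker_mat n D) (ker_mat n D)"
  unfolding bij_betw_def
proof
  let ?L = "E' * D + D' * E"
  have Lc: "?L \<in> carrier_mat n n" using D D' E E' by auto
  obtain Li where Li: "Li \<in> carrier_mat n n" "Li * ?L = 1\<^sub>m n" using inverse_exists[OF Lc L] by auto
  show "inj_on (\<lambda>v. (D' * E) *\<^sub>v v) (ker_mat n D)"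
  proof (rule inj_onI)
    fix v1 v2 assume v1: "v1 \<in> ker_mat n D" and v2: "v2 \<in> ker_mat n D"
      and "(D' * E) *\<^sub>v v1 = (D' * E) *\<^sub>v v2"
    hence eq: "?L *\<^sub>v v1 = ?L *\<^sub>v v2" using laplacian_on_kernel[OF D D' E E'] by simp
    have c: "v1 \<in> carrier_vec n" "v2 \<in> carrier_vec n" using v1 v2 unfolding ker_mat_def by auto
    have "v1 = Li *\<^sub>v (?L *\<^sub>v v1)" using Li Lc c by (simp flip: assoc_mult_mat_vec)
    also have "\<dots> = v2" unfolding eq using Li Lc c by (simp flip: assoc_mult_mat_vec)
    finally show "v1 = v2" .
  qed
  show "(\<lambda>v. (D' * E) *\<^sub>v v) ` ker_mat n D = ker_mat n D"
  proof
    show "(\<lambda>v. (D' * E) *\<^sub>v v) ` ker_mat n D \<subseteq> ker_mat n D"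
    proof
      fix u assume "u \<in> (\<lambda>v. (D' * E) *\<^sub>v v) ` ker_mat n D"
      then obtain v where v: "v \<in> carrier_vec n" "u = (D' * E) *\<^sub>v v" unfolding ker_mat_def by auto
      have "D *\<^sub>v u = (D * D') *\<^sub>v (E *\<^sub>v v)" using v D D' E by simp
      thus "u \<in> ker_mat n D" unfolding ker_mat_def using v D D' E DD' by simp
    qed
    show "ker_mat n D \<subseteq> (\<lambda>v. (D' * E) *\<^sub>v v) ` ker_mat n D"
      using kernel_in_image[OF D D' E E' DD' D'D L L'] by blast
  qed
qed

section \<open>The torsion of an acyclic complex\<close>

lemma acyclic_cohomology_basis_empty:
  assumes dec: "dec_ok m n dprev dk xprev hb xa" and exact: "ker_mat n dk = im_mat m dprev"
  shows "hb = []"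
proof (rule independent_in_span_empty)
  let ?b = "map (\<lambda>v. dprev *\<^sub>v v) xprev"
  have "lin_indep_list n ((?b @ hb) @ xa)" using dec unfolding dec_ok_def by simp
  thus li: "lin_indep_list n (?b @ hb)" by (rule lin_indep_prefix)
  have "set hb \<subseteq> col_span n (?b @ hb)" using col_span_self[OF lin_indep_carrier[OF li]] by auto
  thus "set hb \<subseteq> col_span n ?b" using dec exact unfolding dec_ok_def by auto
qed

lemma acyclic_basis_matrix:
  assumes dec: "dec_ok m n dprev dk xprev [] xa" and dprev: "dprev \<in> carrier_mat n m"
  shows "mat_of_cols n (map (\<lambda>v. dprev *\<^sub>v v) xprev) = dprev * mat_of_cols m xprev"
    and "mat_of_cols n (map (\<lambda>v. dprev *\<^sub>v v) xprev @ [] @ xa)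
           = hcat (dprev * mat_of_cols m xprev) (mat_of_cols n xa)"
    and "det (hcat (dprev * mat_of_cols m xprev) (mat_of_cols n xa)) \<noteq> 0"
    and "length xprev + length xa = n"
    and "set xprev \<subseteq> carrier_vec m"
    and "lin_indep_list n (map (\<lambda>v. dprev *\<^sub>v v) xprev)"
    and "col_span n (map (\<lambda>v. dprev *\<^sub>v v) xprev) = ker_mat n dk"
proof -
  show "mat_of_cols n (map (\<lambda>v. dprev *\<^sub>v v) xprev) = dprev * mat_of_cols m xprev"
    using dec unfolding dec_ok_def by (intro mat_of_cols_map[OF dprev], auto)
  thus eq: "mat_of_cols n (map (\<lambda>v. dprev *\<^sub>v v) xprev @ [] @ xa)
           = hcat (dprev * mat_of_cols m xprev) (mat_of_cols n xa)"
    by (simp add: mat_of_cols_append)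
  show "det (hcat (dprev * mat_of_cols m xprev) (mat_of_cols n xa)) \<noteq> 0"
    using lin_indep_det[of n "map (\<lambda>v. dprev *\<^sub>v v) xprev @ [] @ xa"] dec eq
    unfolding dec_ok_def by auto
  show "length xprev + length xa = n" "set xprev \<subseteq> carrier_vec m"
    and "col_span n (map (\<lambda>v. dprev *\<^sub>v v) xprev) = ker_mat n dk"
    using dec unfolding dec_ok_def by auto
  have "lin_indep_list n ((map (\<lambda>v. dprev *\<^sub>v v) xprev @ []) @ xa)"
    using dec unfolding dec_ok_def by simp
  thus "lin_indep_list n (map (\<lambda>v. dprev *\<^sub>v v) xprev)" using lin_indep_prefix by fastforce
qed

text \<open>Comparing two factorisations of [B K' | A]: through the basis [B | X], via A = B H + X K,
  and (after a block swap) through the basis [A | Y], via B K' = A U + Y W.\<close>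
lemma det_two_bases:
  fixes B :: "'a::idom mat"
  assumes B: "B \<in> carrier_mat n p" and X: "X \<in> carrier_mat n q"
    and A: "A \<in> carrier_mat n q" and Y: "Y \<in> carrier_mat n p"
    and H: "H \<in> carrier_mat p q" and K: "K \<in> carrier_mat q q" and K': "K' \<in> carrier_mat p p"
    and U: "U \<in> carrier_mat q p" and W: "W \<in> carrier_mat p p" and n: "n = p + q"
    and decA: "A = B * H + X * K" and decZ: "B * K' = A * U + Y * W"
  shows "det (hcat A Y) * det W = det (hcat B X) * det K' * det K * det (block_swap p q)"
proof -
  define T where "T = four_block_mat K' H (0\<^sub>m q p) K"
  define S where "S = four_block_mat (1\<^sub>m q) U (0\<^sub>m p q) W"
  have T: "T \<in> carrier_mat (p + q) (p + q)" unfolding T_def using K K' H by auto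
  have S: "S \<in> carrier_mat (p + q) (p + q)" unfolding S_def using U W by (auto simp: add.commute)
  have BK': "B * K' \<in> carrier_mat n p" using B K' by auto
  have BXT: "hcat B X * T = hcat (B * K') A"
    unfolding T_def decA using B X K' H K by (subst hcat_mult[OF B X K' H _ K], auto)
  have AYS: "hcat A Y * S = hcat A (B * K')"
    unfolding S_def decZ using A Y U W by (subst hcat_mult[OF A Y _ U _ W], auto)
  have BX: "hcat B X \<in> carrier_mat (p + q) (p + q)" and AY: "hcat A Y \<in> carrier_mat (p + q) (p + q)"
    using B X A Y n by (auto simp: add.commute)
  have "det S = det W" unfolding S_def
    using det_four_block_mat_lower_left_zero[OF one_carrier_mat U _ W] by simp
  hence "det (hcat A Y) * det W = det (hcat A Y * S)" using det_mult[OF AY S] by simp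
  also have "\<dots> = det (hcat B X * T * block_swap p q)"
    unfolding AYS BXT hcat_block_swap[OF BK' A] ..
  also have "\<dots> = det (hcat B X) * det T * det (block_swap p q)"
    using det_mult BX T block_swap_carrier by (metis mult_carrier_mat)
  also have "det T = det K' * det K"
    unfolding T_def by (rule det_four_block_mat_lower_left_zero[OF K' H _ K], simp)
  finally show ?thesis by (simp add: mult.assoc)
qed

text \<open>Expand the d*-adapted vectors E' Y' in a d-adapted basis [D' X' | X]: the coefficient block K
  of the complement X is injective, because a vector in im E' \<inter> im D' is harmonic.\<close>
lemma complement_coeff_injective:
  fixes D :: "'a::field mat"
  assumes D: "D \<in> carrier_mat n' n" and D': "D' \<in> carrier_mat n n'"
    and E: "E \<in> carrier_mat n' n" and E': "E' \<in> carrier_mat n n'"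
    and DD': "D * D' = 0\<^sub>m n' n'" and EE': "E * E' = 0\<^sub>m n' n'"
    and L: "det (E' * D + D' * E) \<noteq> 0"
    and X': "X' \<in> carrier_mat n' p'" and X: "X \<in> carrier_mat n p" and Y': "Y' \<in> carrier_mat n' q"
    and H: "H \<in> carrier_mat p' q" and K: "K \<in> carrier_mat p q"
    and inj: "injm q (E' * Y')" and dec: "E' * Y' = D' * X' * H + X * K"
  shows "injm q K"
  unfolding injm_def
proof (intro ballI impI)
  fix c assume c: "c \<in> carrier_vec q" and Kc: "K *\<^sub>v c = 0\<^sub>v (dim_row K)"
  define w where "w = (E' * Y') *\<^sub>v c"
  have w: "w \<in> carrier_vec n" unfolding w_def using E' Y' c by auto
  have "w = (D' * X' * H) *\<^sub>v c + (X * K) *\<^sub>v c"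
    unfolding w_def dec using D' X' H X K c by (subst add_mult_distrib_mat_vec[of _ n q], auto)
  also have "(X * K) *\<^sub>v c = 0\<^sub>v n" using Kc X K c by simp
  also have "(D' * X' * H) *\<^sub>v c + 0\<^sub>v n = (D' * (X' * H)) *\<^sub>v c"
  proof -
    have "(D' * (X' * H)) *\<^sub>v c \<in> carrier_vec n"
      using D' X' H c by (metis mult_carrier_mat mult_mat_vec_carrier)
    thus ?thesis using assoc_mult_mat[OF D' X' H] by simp
  qed
  finally have "w = D' *\<^sub>v ((X' * H) *\<^sub>v c)" using assoc_mult_mat_vec[OF D' _ c, of "X' * H"] X' H by auto
  hence "D *\<^sub>v w = (D * D') *\<^sub>v ((X' * H) *\<^sub>v c)" using D D' X' H c by simp
  hence Dw: "D *\<^sub>v w = 0\<^sub>v n'" using DD' X' H c by simp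
  have "E *\<^sub>v w = (E * E') *\<^sub>v (Y' *\<^sub>v c)" unfolding w_def using E E' Y' c by simp
  hence Ew: "E *\<^sub>v w = 0\<^sub>v n'" using EE' Y' c by simp
  have "w = 0\<^sub>v n" by (rule no_harmonic_vectors[OF D D' E E' L w Dw Ew])
  thus "c = 0\<^sub>v q" using inj c E' Y' unfolding injm_def w_def by auto
qed

text \<open>If D (E' Y') = (E Y) U + Y' W with E' E = 0, then W is the matrix of E' D on
  ker E = span (E' Y') in the basis E' Y'.\<close>
lemma restr_det_from_decomposition:
  fixes D :: "'a::field mat"
  assumes D: "D \<in> carrier_mat n' n" and E: "E \<in> carrier_mat n' n" and E': "E' \<in> carrier_mat n n'"
    and E'E: "E' * E = 0\<^sub>m n n" and Y: "Y \<in> carrier_mat n r" and ys: "set ys \<subseteq> carrier_vec n'"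
    and U: "U \<in> carrier_mat r (length ys)" and W: "W \<in> carrier_mat (length ys) (length ys)"
    and li: "lin_indep_list n (map (\<lambda>v. E' *\<^sub>v v) ys)"
    and sp: "col_span n (map (\<lambda>v. E' *\<^sub>v v) ys) = ker_mat n E"
    and dec: "D * (E' * mat_of_cols n' ys) = E * Y * U + mat_of_cols n' ys * W"
  shows "restr_det n (E' * D) (ker_mat n E) = det W"
proof (rule restr_det_eq[OF _ li sp])
  let ?Y' = "mat_of_cols n' ys"
  have Y': "?Y' \<in> carrier_mat n' (length ys)" by auto
  have m: "mat_of_cols n (map (\<lambda>v. E' *\<^sub>v v) ys) = E' * ?Y'" by (rule mat_of_cols_map[OF E' ys])
  show "E' * D \<in> carrier_mat n n" using E' D by auto
  show "W \<in> carrier_mat (length (map (\<lambda>v. E' *\<^sub>v v) ys)) (length (map (\<lambda>v. E' *\<^sub>v v) ys))"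
    using W by simp
  have E'Y': "E' * ?Y' \<in> carrier_mat n (length ys)" using E' Y' by auto
  have "E' * D * (E' * ?Y') = E' * (D * (E' * ?Y'))" by (rule assoc_mult_mat[OF E' _ E'Y'], insert D, auto)
  also have "\<dots> = E' * (E * (Y * U)) + E' * (?Y' * W)" unfolding dec
    using E' E Y U Y' W by (subst mult_add_distrib_mat[OF E'], auto)
  also have "E' * (E * (Y * U)) = (E' * E) * (Y * U)"
    using assoc_mult_mat[OF E' E, of "Y * U" "length ys"] Y U by auto
  also have "\<dots> = 0\<^sub>m n (length ys)" unfolding E'E using Y U by auto
  also have "E' * (?Y' * W) = E' * ?Y' * W" by (rule assoc_mult_mat[symmetric, OF E' Y' W])
  also have "0\<^sub>m n (length ys) + E' * ?Y' * W = E' * ?Y' * W"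
    using E'Y' W by (metis left_add_zero_mat mult_carrier_mat)
  finally show "E' * D * mat_of_cols n (map (\<lambda>v. E' *\<^sub>v v) ys) = mat_of_cols n (map (\<lambda>v. E' *\<^sub>v v) ys) * W"
    unfolding m .
qed

lemma degree_det_identity:
  fixes D :: "'a::field mat"
  assumes D: "D \<in> carrier_mat n' n" and D': "D' \<in> carrier_mat n n'"
    and E: "E \<in> carrier_mat n' n" and E': "E' \<in> carrier_mat n n'"
    and DD': "D * D' = 0\<^sub>m n' n'" and E'E: "E' * E = 0\<^sub>m n n"
    and X: "X \<in> carrier_mat n p" and X': "X' \<in> carrier_mat n' p'" and Y: "Y \<in> carrier_mat n p'"
    and ys: "set ys \<subseteq> carrier_vec n'" "length ys = p" and dim: "p + p' = n'"
    and Q: "det (hcat (E * Y) (mat_of_cols n' ys)) \<noteq> 0"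
    and li: "lin_indep_list n (map (\<lambda>v. E' *\<^sub>v v) ys)"
    and sp: "col_span n (map (\<lambda>v. E' *\<^sub>v v) ys) = ker_mat n E"
    and H: "H \<in> carrier_mat p p'" and K: "K \<in> carrier_mat p' p'"
    and H': "H' \<in> carrier_mat p' p" and K': "K' \<in> carrier_mat p p"
    and decEY: "E * Y = D * X * H + X' * K"
    and decE'Y': "E' * mat_of_cols n' ys = D' * X' * H' + X * K'"
  shows "det (hcat (E * Y) (mat_of_cols n' ys)) * restr_det n (E' * D) (ker_mat n E)
           = det (hcat (D * X) X') * det K' * det K * det (block_swap p p')"
proof -
  let ?Y' = "mat_of_cols n' ys"
  have Y': "?Y' \<in> carrier_mat n' p" using ys by auto
  have EY: "E * Y \<in> carrier_mat n' p'" and DX: "D * X \<in> carrier_mat n' p" using E Y D X by auto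
  have "D * (E' * ?Y') = D * (D' * (X' * H')) + D * (X * K')" unfolding decE'Y'
    using D D' X' H' X K' by (subst mult_add_distrib_mat[OF D], auto)
  also have "D * (D' * (X' * H')) = (D * D') * (X' * H')"
    using assoc_mult_mat[OF D D', of "X' * H'" p] X' H' by auto
  also have "\<dots> = 0\<^sub>m n' p" unfolding DD' using X' H' by auto
  finally have Z: "D * (E' * ?Y') = D * X * K'" using D X K' by auto
  obtain U W where U: "U \<in> carrier_mat p' p" and W: "W \<in> carrier_mat p p"
    and decZ: "D * X * K' = E * Y * U + ?Y' * W"
    using hcat_basis_decomp[OF EY Y' _ Q, of "D * X * K'" p] dim DX K' by auto
  have "restr_det n (E' * D) (ker_mat n E) = det W"
    by (rule restr_det_from_decomposition[OF D E E' E'E Y ys(1) _ _ li sp], insert U W ys decZ Z, auto)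
  moreover have "det (hcat (E * Y) ?Y') * det W = det (hcat (D * X) X') * det K' * det K * det (block_swap p p')"
    by (rule det_two_bases[OF DX X' EY Y' H K K' U W dim[symmetric] decEY decZ])
  ultimately show ?thesis by simp
qed


text \<open>Expand the d*-adapted vectors E1 Y1, E0 Y0 in the d-adapted bases of C^0, C^1.  The
  coefficient blocks K, K' on the complements are injective, which forces the complements of
  d and of d* to have matching dimensions; so K, K' are square and nonsingular.\<close>
lemma dual_basis_expansion:
  fixes D0 D1 E0 E1 :: "'a::field mat"
  assumes D0: "D0 \<in> carrier_mat n1 n0" and D1: "D1 \<in> carrier_mat n0 n1"
    and E0: "E0 \<in> carrier_mat n1 n0" and E1: "E1 \<in> carrier_mat n0 n1"
    and dd0: "D1 * D0 = 0\<^sub>m n0 n0" and dd1: "D0 * D1 = 0\<^sub>m n1 n1"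
    and ee0: "E1 * E0 = 0\<^sub>m n0 n0" and ee1: "E0 * E1 = 0\<^sub>m n1 n1"
    and L0: "det (E1 * D0 + D1 * E0) \<noteq> 0" and L1: "det (E0 * D1 + D0 * E1) \<noteq> 0"
    and X0: "X0 \<in> carrier_mat n0 p0" and X1: "X1 \<in> carrier_mat n1 p1"
    and Y0: "Y0 \<in> carrier_mat n0 q0" and Y1: "Y1 \<in> carrier_mat n1 q1"
    and P0: "det (hcat (D1 * X1) X0) \<noteq> 0" and P1: "det (hcat (D0 * X0) X1) \<noteq> 0"
    and dims: "p1 + p0 = n0" "p0 + p1 = n1" "q1 + q0 = n0"
    and inj1: "injm q1 (E1 * Y1)" and inj0: "injm q0 (E0 * Y0)"
  obtains H K H' K' where "q0 = p1" and "q1 = p0"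
    and "H \<in> carrier_mat p0 p1" and "K \<in> carrier_mat p1 p1"
    and "H' \<in> carrier_mat p1 p0" and "K' \<in> carrier_mat p0 p0"
    and "det K \<noteq> 0" and "det K' \<noteq> 0"
    and "E0 * Y0 = D0 * X0 * H + X1 * K" and "E1 * Y1 = D1 * X1 * H' + X0 * K'"
proof -
  have D1X1: "D1 * X1 \<in> carrier_mat n0 p1" and D0X0: "D0 * X0 \<in> carrier_mat n1 p0"
    and E1Y1: "E1 * Y1 \<in> carrier_mat n0 q1" and E0Y0: "E0 * Y0 \<in> carrier_mat n1 q0"
    using D0 D1 E0 E1 X0 X1 Y0 Y1 by auto
  obtain H' K' where H': "H' \<in> carrier_mat p1 q1" and K': "K' \<in> carrier_mat p0 q1"
    and dec1: "E1 * Y1 = D1 * X1 * H' + X0 * K'"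
    using hcat_basis_decomp[OF D1X1 X0 dims(1) P0 E1Y1] by auto
  obtain H K where H: "H \<in> carrier_mat p0 q0" and K: "K \<in> carrier_mat p1 q0"
    and dec0: "E0 * Y0 = D0 * X0 * H + X1 * K"
    using hcat_basis_decomp[OF D0X0 X1 dims(2) P1 E0Y0] by auto
  have injK: "injm q1 K'" "injm q0 K"
    using complement_coeff_injective[OF D0 D1 E0 E1 dd1 ee1 L0 X1 X0 Y1 H' K' inj1 dec1]
      complement_coeff_injective[OF D1 D0 E1 E0 dd0 ee0 L1 X0 X1 Y0 H K inj0 dec0] by auto
  hence q: "q1 = p0" "q0 = p1"
    using injm_cols_le[OF _ K'] injm_cols_le[OF _ K] dims by fastforce+
  have "det K \<noteq> 0" "det K' \<noteq> 0" using injK injm_det K K' q by auto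
  thus ?thesis using that q H K H' K' dec0 dec1 by auto
qed

text \<open>When the cohomology bases are empty and the complements have matching lengths, the
  sign in the torsion is +1 and the torsion is a ratio of the four basis determinants.\<close>
lemma cm_torsion_of_bases:
  fixes D0 D1 E0 E1 :: "'a::field mat"
  assumes D0: "D0 \<in> carrier_mat n1 n0" and D1: "D1 \<in> carrier_mat n0 n1"
    and E0: "E0 \<in> carrier_mat n1 n0" and E1: "E1 \<in> carrier_mat n0 n1"
    and d0: "dec_ok n1 n0 D1 D0 xa1 [] xa0" and d1: "dec_ok n0 n1 D0 D1 xa0 [] xa1"
    and e0: "dec_ok n1 n0 E1 E0 ya1 [] ya0" and e1: "dec_ok n0 n1 E0 E1 ya0 [] ya1"
    and len: "length ya0 = length xa1" "length ya1 = length xa0"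
  shows "cm_torsion n0 n1 D0 D1 E0 E1 \<gamma>0 \<gamma>1 xa0 xa1 [] [] ya0 ya1 [] [] =
      (\<gamma>0 / det (hcat (D1 * mat_of_cols n1 xa1) (mat_of_cols n0 xa0))
        / (\<gamma>1 / det (hcat (D0 * mat_of_cols n0 xa0) (mat_of_cols n1 xa1)))) /
      (\<gamma>0 / det (hcat (E1 * mat_of_cols n1 ya1) (mat_of_cols n0 ya0))
        / (\<gamma>1 / det (hcat (E0 * mat_of_cols n0 ya0) (mat_of_cols n1 ya1))))"
proof -
  let ?p0 = "length xa0" and ?p1 = "length xa1"
  have "?p1 * ?p0 + ?p0 * ?p1 = 2 * (?p0 * ?p1)" by simp
  hence "(-1::'a) ^ (?p1 * ?p0 + ?p0 * ?p1) = 1" unfolding power_mult by (simp only:) simp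
  thus ?thesis unfolding cm_torsion_def Let_def h_coeff_def
      acyclic_basis_matrix(2)[OF d0 D1] acyclic_basis_matrix(2)[OF d1 D0]
      acyclic_basis_matrix(2)[OF e0 E1] acyclic_basis_matrix(2)[OF e1 E0]
    using len by simp
qed

text \<open>The final cancellation: the common factor m = det K' det K det(swap) drops out.\<close>
lemma ratio_of_degree_identities:
  fixes a b c d r0 r1 m g0 g1 :: "'a::field"
  assumes i0: "c * r1 = a * m" and i1: "d * r0 = b * m"
    and nz: "a \<noteq> 0" "b \<noteq> 0" "c \<noteq> 0" "d \<noteq> 0" "m \<noteq> 0" "g0 \<noteq> 0" "g1 \<noteq> 0"
  shows "(g0 / a / (g1 / b)) / (g0 / c / (g1 / d)) = r0 / r1"
proof -
  have r0: "r0 = b * m / d" and r1: "r1 = a * m / c" using i0 i1 nz by (simp_all add: field_simps)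
  show ?thesis unfolding r0 r1 using nz by (simp add: field_simps)
qed

lemma cm_torsion_acyclic:
  fixes D0 D1 E0 E1 :: "'a::field mat"
  assumes D0: "D0 \<in> carrier_mat n1 n0" and D1: "D1 \<in> carrier_mat n0 n1"
    and E0: "E0 \<in> carrier_mat n1 n0" and E1: "E1 \<in> carrier_mat n0 n1"
    and dd0: "D1 * D0 = 0\<^sub>m n0 n0" and dd1: "D0 * D1 = 0\<^sub>m n1 n1"
    and ee0: "E1 * E0 = 0\<^sub>m n0 n0" and ee1: "E0 * E1 = 0\<^sub>m n1 n1"
    and L0: "det (E1 * D0 + D1 * E0) \<noteq> 0" and L1: "det (E0 * D1 + D0 * E1) \<noteq> 0"
    and kD0: "ker_mat n0 D0 = im_mat n1 D1" and kD1: "ker_mat n1 D1 = im_mat n0 D0"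
    and kE0: "ker_mat n0 E0 = im_mat n1 E1" and kE1: "ker_mat n1 E1 = im_mat n0 E0"
    and g0: "\<gamma>0 \<noteq> 0" and g1: "\<gamma>1 \<noteq> 0"
    and cm: "cm_data n0 n1 D0 D1 E0 E1 xa0 xa1 hb0 hb1 ya0 ya1 hc0 hc1"
  shows "cm_torsion n0 n1 D0 D1 E0 E1 \<gamma>0 \<gamma>1 xa0 xa1 hb0 hb1 ya0 ya1 hc0 hc1
           = restr_det n0 (E1 * D0) (ker_mat n0 E0) / restr_det n1 (E0 * D1) (ker_mat n1 E1)"
proof -
  from cm have d0: "dec_ok n1 n0 D1 D0 xa1 hb0 xa0" and d1: "dec_ok n0 n1 D0 D1 xa0 hb1 xa1"
    and e0: "dec_ok n1 n0 E1 E0 ya1 hc0 ya0" and e1: "dec_ok n0 n1 E0 E1 ya0 hc1 ya1"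
    unfolding cm_data_def by auto
  have empty: "hb0 = []" "hb1 = []" "hc0 = []" "hc1 = []"
    using acyclic_cohomology_basis_empty[OF d0 kD0] acyclic_cohomology_basis_empty[OF d1 kD1]
      acyclic_cohomology_basis_empty[OF e0 kE0] acyclic_cohomology_basis_empty[OF e1 kE1] by auto
  note d0 = d0[unfolded empty] and d1 = d1[unfolded empty]
    and e0 = e0[unfolded empty] and e1 = e1[unfolded empty]
  note P0 = acyclic_basis_matrix[OF d0 D1] and P1 = acyclic_basis_matrix[OF d1 D0]
    and Q0 = acyclic_basis_matrix[OF e0 E1] and Q1 = acyclic_basis_matrix[OF e1 E0]
  define X0 X1 Y0 Y1 where "X0 = mat_of_cols n0 xa0" and "X1 = mat_of_cols n1 xa1"
    and "Y0 = mat_of_cols n0 ya0" and "Y1 = mat_of_cols n1 ya1"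
  define p0 p1 where "p0 = length xa0" and "p1 = length xa1"
  note defs = X0_def X1_def Y0_def Y1_def p0_def p1_def
  have X0: "X0 \<in> carrier_mat n0 p0" and X1: "X1 \<in> carrier_mat n1 p1"
    and Y0: "Y0 \<in> carrier_mat n0 (length ya0)" and Y1: "Y1 \<in> carrier_mat n1 (length ya1)"
    unfolding defs by auto
  have "injm (length ya1) (E1 * Y1)" "injm (length ya0) (E0 * Y0)"
    using Q0(1,6) Q1(1,6) unfolding lin_indep_injm defs by auto
  then obtain H K H' K' where q: "length ya0 = p1" "length ya1 = p0"
    and HK: "H \<in> carrier_mat p0 p1" "K \<in> carrier_mat p1 p1"
      "H' \<in> carrier_mat p1 p0" "K' \<in> carrier_mat p0 p0"
    and dK: "det K \<noteq> 0" "det K' \<noteq> 0"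
    and dec0: "E0 * Y0 = D0 * X0 * H + X1 * K" and dec1: "E1 * Y1 = D1 * X1 * H' + X0 * K'"
    using dual_basis_expansion[OF D0 D1 E0 E1 dd0 dd1 ee0 ee1 L0 L1 X0 X1 Y0 Y1]
      P0(3,4) P1(3,4) Q0(4) unfolding defs by metis
  have id1: "det (hcat (E0 * Y0) Y1) * restr_det n0 (E1 * D0) (ker_mat n0 E0)
      = det (hcat (D0 * X0) X1) * (det K' * det K * det (block_swap p0 p1 :: 'a mat))"
    using degree_det_identity[OF D0 D1 E0 E1 dd1 ee0 X0 X1 _ Q0(5) q(2) _ _ Q0(6,7) HK
        dec0 dec1[unfolded Y1_def]] Y0 P1(4) Q1(3) q unfolding defs by (simp add: mult.assoc)
  have id0: "det (hcat (E1 * Y1) Y0) * restr_det n1 (E0 * D1) (ker_mat n1 E1)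
      = det (hcat (D1 * X1) X0) * (det K' * det K * det (block_swap p1 p0 :: 'a mat))"
    using degree_det_identity[OF D1 D0 E1 E0 dd0 ee1 X1 X0 _ Q1(5) q(1) _ _ Q1(6,7) HK(3,4,1,2)
        dec1 dec0[unfolded Y0_def]] Y1 P0(4) Q0(3) q unfolding defs by (simp add: ac_simps)
  show ?thesis
    unfolding empty cm_torsion_of_bases[OF D0 D1 E0 E1 d0 d1 e0 e1 q[unfolded defs],
      folded X0_def X1_def Y0_def Y1_def]
    by (rule ratio_of_degree_identities[OF id0[unfolded det_block_swap_sym[of p1 p0]] id1],
        insert P0(3) P1(3) Q0(3) Q1(3) dK g0 g1 det_block_swap_nonzero[of p0 p1], unfold defs, auto)
qed

theorem proposition2p1:
  fixes D0 D1 E0 E1 :: "'a::field_char_0 mat" and n0 n1 :: nat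
  assumes D0: "D0 \<in> carrier_mat n1 n0" and D1: "D1 \<in> carrier_mat n0 n1"
    and E0: "E0 \<in> carrier_mat n1 n0" and E1: "E1 \<in> carrier_mat n0 n1"
    and dd0: "D1 * D0 = 0\<^sub>m n0 n0" and dd1: "D0 * D1 = 0\<^sub>m n1 n1"
    and ee0: "E1 * E0 = 0\<^sub>m n0 n0" and ee1: "E0 * E1 = 0\<^sub>m n1 n1"
    and lap: "\<not> eigenvalue (four_block_mat (E1 * D0 + D1 * E0) (0\<^sub>m n0 n1)
                                          (0\<^sub>m n1 n0) (E0 * D1 + D0 * E1)) 0"
  shows "ker_mat n0 D0 = im_mat n1 D1 \<and> ker_mat n1 D1 = im_mat n0 D0
       \<and> ker_mat n0 E0 = im_mat n1 E1 \<and> ker_mat n1 E1 = im_mat n0 E0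
       \<and> bij_betw (\<lambda>v. (E1 * D0) *\<^sub>v v) (ker_mat n0 E0) (ker_mat n0 E0)
       \<and> bij_betw (\<lambda>v. (E0 * D1) *\<^sub>v v) (ker_mat n1 E1) (ker_mat n1 E1)
       \<and> (\<forall>\<gamma>0 \<gamma>1 xa0 xa1 hb0 hb1 ya0 ya1 hc0 hc1.
            \<gamma>0 \<noteq> 0 \<longrightarrow> \<gamma>1 \<noteq> 0 \<longrightarrow>
            cm_data n0 n1 D0 D1 E0 E1 xa0 xa1 hb0 hb1 ya0 ya1 hc0 hc1 \<longrightarrow>
            cm_torsion n0 n1 D0 D1 E0 E1 \<gamma>0 \<gamma>1 xa0 xa1 hb0 hb1 ya0 ya1 hc0 hc1
              = restr_det n0 (E1 * D0) (ker_mat n0 E0) / restr_det n1 (E0 * D1) (ker_mat n1 E1))"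
proof -
  have "E1 * D0 + D1 * E0 \<in> carrier_mat n0 n0" and "E0 * D1 + D0 * E1 \<in> carrier_mat n1 n1"
    using D0 D1 E0 E1 by auto
  note L = laplacian_blocks_nonsingular[OF this lap]
  (* the same Laplacian blocks, written with the roles of d and d* exchanged *)
  have "D1 * E0 + E1 * D0 = E1 * D0 + D1 * E0" and "D0 * E1 + E0 * D1 = E0 * D1 + D0 * E1"
    using D0 D1 E0 E1 by (auto intro: comm_add_mat)
  with L have L': "det (D1 * E0 + E1 * D0) \<noteq> 0" "det (D0 * E1 + E0 * D1) \<noteq> 0" by auto
  have kD0: "ker_mat n0 D0 = im_mat n1 D1" by (rule kernel_eq_image[OF D0 D1 E0 E1 dd1 dd0 L])
  have kD1: "ker_mat n1 D1 = im_mat n0 D0" by (rule kernel_eq_image[OF D1 D0 E1 E0 dd0 dd1 L(2,1)])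
  have kE0: "ker_mat n0 E0 = im_mat n1 E1" by (rule kernel_eq_image[OF E0 E1 D0 D1 ee1 ee0 L'])
  have kE1: "ker_mat n1 E1 = im_mat n0 E0" by (rule kernel_eq_image[OF E1 E0 D1 D0 ee0 ee1 L'(2,1)])
  show ?thesis
    using kD0 kD1 kE0 kE1
      kernel_bij[OF E0 E1 D0 D1 ee1 ee0 L'] kernel_bij[OF E1 E0 D1 D0 ee0 ee1 L'(2,1)]
      cm_torsion_acyclic[OF D0 D1 E0 E1 dd0 dd1 ee0 ee1 L kD0 kD1 kE0 kE1] by blast
qed

end
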